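(* Let $f_1,\dots,f_n:\mathbb{R}^d\to\mathbb{R}$ satisfy Assumptions A1 and A2. Then for all $x\in\mathbb{R}^d$ and $\beta\in\Delta^{n-1}$, \[\|\nabla x^*(\beta)-\widehat{\nabla}x^*(x,\beta)\|_{1,2}\le\frac{1}{\mu}\frac{M_1}{2M_0}\|\nabla f_\beta(x)\|_2.\]
   Context: Assumption A1: each $f_i$ is twice differentiable with $\mu\mathbf{I}\preceq\nabla^2 f_i\preceq L\mathbf{I}$, $0<\mu\le L$, $\kappa:=L/\mu$. Assumption A2: each $\nabla^2 f_i$ is $L_H$-Lipschitz (operator norm). $F=(f_1,\dots,f_n)$, $\nabla F(x)\in\mathbb{R}^{n\times d}$ its Jacobian, $f_\beta=\sum_i\beta_if_i$, $x^*(\beta)=x_\beta=\operatorname{argmin}_x f_\beta(x)$, so $\nabla x^*(\beta)=-\nabla^2f_\beta(x_\beta)^{-1}\nabla F(x_\beta)^\top$. The approximation is $\widehat{\nabla}x^*(x,\beta):=-\nabla^2 f_\beta(x)^{-1}\nabla F(x)^\top$. $R$ is the $\ell_2$-diameter of the Pareto set of $F$ (the set of $x$ with $\nabla f_\beta(x)=0$ for some $\beta\in\Delta^{n-1}$), $M_0:=\kappa R$, $M_1:=2\kappa^2R(1+L_HR/\mu)$. $\|A\|_{1,2}:=\sup_{\|z\|_1=1}\|Az\|_2$. *)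

theory Defs
  imports "HOL-Analysis.Analysis"
begin

definition prob_simplex :: "(real ^ 'n) set" where
  "prob_simplex = {\<beta>. (\<forall>i. 0 \<le> \<beta> $ i) \<and> (\<Sum>i\<in>UNIV. \<beta> $ i) = 1}"

definition fbeta :: "('n::finite \<Rightarrow> real ^ 'd \<Rightarrow> real) \<Rightarrow> real ^ 'n \<Rightarrow> real ^ 'd \<Rightarrow> real" where
  "fbeta f \<beta> x = (\<Sum>i\<in>UNIV. \<beta> $ i * f i x)"

definition gbeta :: "('n::finite \<Rightarrow> real ^ 'd \<Rightarrow> real ^ 'd) \<Rightarrow> real ^ 'n \<Rightarrow> real ^ 'd \<Rightarrow> real ^ 'd" where
  "gbeta g \<beta> x = (\<Sum>i\<in>UNIV. \<beta> $ i *\<^sub>R g i x)"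

definition Hbeta :: "('n::finite \<Rightarrow> real ^ 'd \<Rightarrow> real ^ 'd ^ 'd) \<Rightarrow> real ^ 'n \<Rightarrow> real ^ 'd \<Rightarrow> real ^ 'd ^ 'd" where
  "Hbeta H \<beta> x = (\<Sum>i\<in>UNIV. \<beta> $ i *\<^sub>R H i x)"

text \<open>Transposed Jacobian \<nabla>F(x)^T \<in> R^{d\<times>n}: its i-th column is the gradient of f_i.\<close>
definition jacT :: "('n::finite \<Rightarrow> real ^ 'd \<Rightarrow> real ^ 'd) \<Rightarrow> real ^ 'd \<Rightarrow> real ^ 'n ^ 'd" where
  "jacT g x = (\<chi> k i. g i x $ k)"

definition xstar :: "('n::finite \<Rightarrow> real ^ 'd \<Rightarrow> real) \<Rightarrow> real ^ 'n \<Rightarrow> real ^ 'd" where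
  "xstar f \<beta> = (THE x. \<forall>y. fbeta f \<beta> x \<le> fbeta f \<beta> y)"

definition approx_grad ::
  "('n::finite \<Rightarrow> real ^ 'd \<Rightarrow> real ^ 'd) \<Rightarrow> ('n::finite \<Rightarrow> real ^ 'd \<Rightarrow> real ^ 'd ^ 'd) \<Rightarrow> real ^ 'd \<Rightarrow> real ^ 'n \<Rightarrow> real ^ 'n ^ 'd" where
  "approx_grad g H x \<beta> = - (matrix_inv (Hbeta H \<beta> x) ** jacT g x)"

definition grad_xstar ::
  "('n::finite \<Rightarrow> real ^ 'd \<Rightarrow> real) \<Rightarrow> ('n::finite \<Rightarrow> real ^ 'd \<Rightarrow> real ^ 'd) \<Rightarrow> ('n::finite \<Rightarrow> real ^ 'd \<Rightarrow> real ^ 'd ^ 'd) \<Rightarrow> real ^ 'n \<Rightarrow> real ^ 'n ^ 'd" where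
  "grad_xstar f g H \<beta> = approx_grad g H (xstar f \<beta>) \<beta>"

definition pareto_set :: "('n::finite \<Rightarrow> real ^ 'd \<Rightarrow> real ^ 'd) \<Rightarrow> (real ^ 'd) set" where
  "pareto_set g = {x. \<exists>\<beta>\<in>prob_simplex. gbeta g \<beta> x = 0}"

definition norm12 :: "real ^ 'n ^ 'd \<Rightarrow> real" where
  "norm12 A = Sup {norm (A *v z) | z. (\<Sum>i\<in>UNIV. \<bar>z $ i\<bar>) = 1}"

end

theory Submission
  imports Defs
begin

text \<open>Write \<open>x\<^sub>\<beta>\<close> for the minimiser of \<open>f\<^sub>\<beta>\<close> and \<open>A\<close>, \<open>B\<close> for the Hessians of \<open>f\<^sub>\<beta>\<close> at \<open>x\<close>
  and \<open>x\<^sub>\<beta>\<close>. Column \<open>i\<close> of the error is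
  \<open>A\<^sup>-\<^sup>1 \<nabla>f\<^sub>i(x) - B\<^sup>-\<^sup>1 \<nabla>f\<^sub>i(x\<^sub>\<beta>) = A\<^sup>-\<^sup>1 ((\<nabla>f\<^sub>i(x) - \<nabla>f\<^sub>i(x\<^sub>\<beta>)) + (B - A) B\<^sup>-\<^sup>1 \<nabla>f\<^sub>i(x\<^sub>\<beta>))\<close>.
  Strong convexity bounds the inverse Hessians by \<open>1/\<mu>\<close> and \<open>\<parallel>x - x\<^sub>\<beta>\<parallel>\<close> by \<open>\<parallel>\<nabla>f\<^sub>\<beta>(x)\<parallel>/\<mu>\<close>;
  the gradients are \<open>L\<close>-Lipschitz and the Hessians \<open>L\<^sub>H\<close>-Lipschitz; and \<open>\<parallel>\<nabla>f\<^sub>i(x\<^sub>\<beta>)\<parallel> \<le> L R\<close>,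
  because \<open>f\<^sub>i\<close> has a stationary point in the Pareto set, within distance \<open>R\<close> of \<open>x\<^sub>\<beta>\<close>.
  Finally the \<open>(1,2)\<close>-norm of a matrix is at most its largest column norm.\<close>

lemma has_real_derivative_along_line:
  fixes F :: "'a::real_inner \<Rightarrow> real"
  assumes F: "\<And>y. (F has_derivative (\<lambda>h. G y \<bullet> h)) (at y)"
  shows "((\<lambda>t. F (x + t *\<^sub>R w)) has_real_derivative G (x + t *\<^sub>R w) \<bullet> w) (at t)"
proof -
  have "((\<lambda>t. x + t *\<^sub>R w) has_derivative (\<lambda>h. h *\<^sub>R w)) (at t)"
    by (auto intro!: derivative_eq_intros)
  from has_derivative_compose[OF this F]
  show ?thesis
    unfolding has_field_derivative_def by (rule has_derivative_eq_rhs) (auto simp: mult.commute)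
qed

lemma has_real_derivative_directional_gradient:
  fixes G :: "real^'d::finite \<Rightarrow> real^'d"
  assumes G: "\<And>y. (G has_derivative (\<lambda>h. Hm y *v h)) (at y)"
  shows "((\<lambda>t. G (x + t *\<^sub>R w) \<bullet> w) has_real_derivative w \<bullet> (Hm (x + t *\<^sub>R w) *v w)) (at t)"
proof -
  have "((\<lambda>t. x + t *\<^sub>R w) has_derivative (\<lambda>h. h *\<^sub>R w)) (at t)"
    by (auto intro!: derivative_eq_intros)
  from has_derivative_inner_left[OF has_derivative_compose[OF this G]]
  show ?thesis
    unfolding has_field_derivative_def
    by (rule has_derivative_eq_rhs) (auto simp: inner_commute matrix_vector_mult_scaleR)
qed

lemma quadratic_upper_bound:
  fixes F :: "real^'d::finite \<Rightarrow> real"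
  assumes F: "\<And>y. (F has_derivative (\<lambda>h. G y \<bullet> h)) (at y)"
    and G: "\<And>y. (G has_derivative (\<lambda>h. Hm y *v h)) (at y)"
    and upper: "\<And>y v. v \<bullet> (Hm y *v v) \<le> b * (norm v)\<^sup>2"
  shows "F y \<le> F x + G x \<bullet> (y - x) + b/2 * (norm (y - x))\<^sup>2"
proof -
  define w where "w = y - x"
  define \<psi> where "\<psi> t = F (x + t *\<^sub>R w) - F x - t * (G x \<bullet> w) - b/2 * (norm w)\<^sup>2 * t\<^sup>2" for t
  define \<psi>' where "\<psi>' t = G (x + t *\<^sub>R w) \<bullet> w - G x \<bullet> w - b * (norm w)\<^sup>2 * t" for t
  have \<psi>: "(\<psi> has_real_derivative \<psi>' t) (at t)" for t
    unfolding \<psi>_def[abs_def] \<psi>'_def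
    by (rule derivative_eq_intros has_real_derivative_along_line[OF F] | simp)+
  have \<psi>': "(\<psi>' has_real_derivative w \<bullet> (Hm (x + t *\<^sub>R w) *v w) - b * (norm w)\<^sup>2) (at t)" for t
    unfolding \<psi>'_def[abs_def]
    by (rule derivative_eq_intros has_real_derivative_directional_gradient[OF G] | simp)+
  have \<psi>'_nonpos: "\<psi>' t \<le> 0" if "0 \<le> t" for t
  proof -
    have "\<psi>' t \<le> \<psi>' 0"
      by (rule DERIV_nonpos_imp_nonincreasing[OF that]) (use \<psi>' upper in fastforce)
    then show ?thesis
      by (simp add: \<psi>'_def)
  qed
  have "\<psi> 1 \<le> \<psi> 0"
    by (rule DERIV_nonpos_imp_nonincreasing) (use \<psi> \<psi>'_nonpos in auto)
  then show ?thesis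
    by (simp add: \<psi>_def w_def)
qed

lemma matrix_vector_mult_uminus: "(- A) *v v = - (A *v v)"
  for A :: "real^'n::finite^'m::finite"
  by (simp add: matrix_vector_mult_def vec_eq_iff sum_negf)

lemma quadratic_lower_bound:
  fixes F :: "real^'d::finite \<Rightarrow> real"
  assumes F: "\<And>y. (F has_derivative (\<lambda>h. G y \<bullet> h)) (at y)"
    and G: "\<And>y. (G has_derivative (\<lambda>h. Hm y *v h)) (at y)"
    and lower: "\<And>y v. a * (norm v)\<^sup>2 \<le> v \<bullet> (Hm y *v v)"
  shows "F x + G x \<bullet> (y - x) + a/2 * (norm (y - x))\<^sup>2 \<le> F y"
proof -
  have "((\<lambda>y. - F y) has_derivative (\<lambda>h. (- G y) \<bullet> h)) (at y)" for y
    using F by (auto intro!: derivative_eq_intros)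
  moreover have "((\<lambda>y. - G y) has_derivative (\<lambda>h. (- Hm y) *v h)) (at y)" for y
    using G by (auto intro!: derivative_eq_intros simp: matrix_vector_mult_uminus)
  moreover have "v \<bullet> ((- Hm y) *v v) \<le> (- a) * (norm v)\<^sup>2" for y v
    using lower by (simp add: matrix_vector_mult_uminus)
  ultimately show ?thesis
    using quadratic_upper_bound[of "\<lambda>y. - F y" "\<lambda>y. - G y" "\<lambda>y. - Hm y" "- a" y x] by simp
qed

locale strongly_convex_smooth =
  fixes F :: "real^'d::finite \<Rightarrow> real" and G :: "real^'d \<Rightarrow> real^'d"
    and Hm :: "real^'d \<Rightarrow> real^'d^'d" and \<mu> L :: real
  assumes gradient: "\<And>y. (F has_derivative (\<lambda>h. G y \<bullet> h)) (at y)"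
    and hessian: "\<And>y. (G has_derivative (\<lambda>h. Hm y *v h)) (at y)"
    and mu_pos: "0 < \<mu>" and mu_le_L: "\<mu> \<le> L"
    and hessian_lower: "\<And>y v. \<mu> * (norm v)\<^sup>2 \<le> v \<bullet> (Hm y *v v)"
    and hessian_upper: "\<And>y v. v \<bullet> (Hm y *v v) \<le> L * (norm v)\<^sup>2"
begin

lemma L_pos: "0 < L"
  using mu_pos mu_le_L by linarith

lemma quadratic_upper: "F y \<le> F x + G x \<bullet> (y - x) + L/2 * (norm (y - x))\<^sup>2"
  by (rule quadratic_upper_bound[OF gradient hessian hessian_upper])

lemma quadratic_lower: "F x + G x \<bullet> (y - x) + \<mu>/2 * (norm (y - x))\<^sup>2 \<le> F y"
  by (rule quadratic_lower_bound[OF gradient hessian hessian_lower])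

lemma gradient_step_decrease: "F (y - (1/L) *\<^sub>R G y) \<le> F y - (norm (G y))\<^sup>2 / (2 * L)"
proof -
  have "F (y - (1/L) *\<^sub>R G y) \<le> F y + G y \<bullet> (- (1/L) *\<^sub>R G y) + L/2 * (norm (- (1/L) *\<^sub>R G y))\<^sup>2"
    using quadratic_upper[of "y - (1/L) *\<^sub>R G y" y] by simp
  also have "\<dots> = F y - (norm (G y))\<^sup>2 / (2 * L)"
    using L_pos by (simp add: dot_square_norm power2_eq_square field_simps)
  finally show ?thesis .
qed

lemma stationary_imp_minimum:
  assumes "G p = 0"
  shows "F p \<le> F y"
proof -
  have "F p + \<mu>/2 * (norm (y - p))\<^sup>2 \<le> F y"
    using quadratic_lower[of p y] assms by simp
  moreover have "0 \<le> \<mu>/2 * (norm (y - p))\<^sup>2"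
    using mu_pos by simp
  ultimately show ?thesis
    by linarith
qed

lemma minimum_imp_stationary:
  assumes "\<And>y. F m \<le> F y"
  shows "G m = 0"
proof -
  have "(norm (G m))\<^sup>2 / (2 * L) \<le> 0"
    using assms[of "m - (1/L) *\<^sub>R G m"] gradient_step_decrease[of m] by linarith
  then have "(norm (G m))\<^sup>2 \<le> 0"
    using L_pos by (simp add: divide_le_0_iff)
  then show ?thesis
    by simp
qed

lemma stationary_dist_le:
  assumes "G p = 0"
  shows "\<mu> * norm (y - p) \<le> norm (G y)"
proof -
  have "F y - G y \<bullet> (y - p) + \<mu>/2 * (norm (y - p))\<^sup>2 \<le> F p"
    using quadratic_lower[of y p] by (simp add: inner_diff_right norm_minus_commute)
  moreover have "F p + \<mu>/2 * (norm (y - p))\<^sup>2 \<le> F y"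
    using quadratic_lower[of p y] assms by simp
  moreover have "G y \<bullet> (y - p) \<le> norm (G y) * norm (y - p)"
    by (rule norm_cauchy_schwarz)
  ultimately have "(\<mu> * norm (y - p)) * norm (y - p) \<le> norm (G y) * norm (y - p)"
    by (simp add: power2_eq_square algebra_simps)
  then show ?thesis
    using mu_pos by (cases "y = p") (auto intro: mult_right_le_imp_le)
qed

lemma argmin_eq_stationary:
  assumes "G p = 0"
  shows "(THE x. \<forall>y. F x \<le> F y) = p"
proof (rule the_equality)
  show "\<forall>y. F p \<le> F y"
    using stationary_imp_minimum[OF assms] by blast
next
  fix q
  assume "\<forall>y. F q \<le> F y"
  then have "G q = 0"
    by (intro minimum_imp_stationary) blast
  then show "q = p"
    using stationary_dist_le[OF assms, of q] mu_pos by (simp add: mult_le_0_iff)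
qed

lemma exists_minimum: "\<exists>m. \<forall>y. F m \<le> F y"
proof -
  define r where "r = 2 * norm (G 0) / \<mu>"
  have r_nonneg: "0 \<le> r"
    using mu_pos by (simp add: r_def)
  have far: "F 0 < F y" if "r < norm y" for y
  proof -
    have "norm (G 0) * norm y = \<mu>/2 * r * norm y"
      using mu_pos by (simp add: r_def)
    also have "\<dots> < \<mu>/2 * norm y * norm y"
      using mu_pos that r_nonneg by (intro mult_strict_right_mono mult_strict_left_mono) auto
    finally have "norm (G 0) * norm y < \<mu>/2 * (norm y)\<^sup>2"
      by (simp add: power2_eq_square)
    moreover have "- (norm (G 0) * norm y) \<le> G 0 \<bullet> y"
      using norm_cauchy_schwarz[of "- G 0" y] by simp
    moreover have "F 0 + G 0 \<bullet> y + \<mu>/2 * (norm y)\<^sup>2 \<le> F y"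
      using quadratic_lower[of 0 y] by simp
    ultimately show ?thesis
      by linarith
  qed
  have "continuous_on (cball 0 r) F"
    by (rule continuous_at_imp_continuous_on) (use gradient has_derivative_continuous in blast)
  moreover have "0 \<in> cball (0::real^'d) r"
    using mu_pos by (simp add: r_def)
  ultimately obtain m where "\<And>y. y \<in> cball 0 r \<Longrightarrow> F m \<le> F y"
    using continuous_attains_inf[OF compact_cball] by blast
  then have "F m \<le> F y" for y
    using far[of y] \<open>0 \<in> cball 0 r\<close> by (cases "y \<in> cball 0 r") fastforce+
  then show ?thesis
    by blast
qed

lemma exists_stationary: "\<exists>p. G p = 0"
  using exists_minimum minimum_imp_stationary by blast

lemma strongly_convex_smooth_tilted:
  "strongly_convex_smooth (\<lambda>y. F y - c \<bullet> y) (\<lambda>y. G y - c) Hm \<mu> L"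
proof
  show "((\<lambda>y. F y - c \<bullet> y) has_derivative (\<lambda>h. (G y - c) \<bullet> h)) (at y)" for y
    by (rule has_derivative_eq_rhs, (rule derivative_eq_intros gradient)+) (auto simp: inner_diff_left)
  show "((\<lambda>y. G y - c) has_derivative (\<lambda>h. Hm y *v h)) (at y)" for y
    by (rule has_derivative_eq_rhs, (rule derivative_eq_intros hessian)+) auto
qed (use mu_pos mu_le_L hessian_lower hessian_upper in auto)

text \<open>Co-coercivity, obtained from the tilted functions \<open>F - \<langle>G a, _\<rangle>\<close>, gives the Lipschitz
  bound without symmetry of \<open>Hm\<close>, which is not assumed (so \<open>\<parallel>Hm y\<parallel> \<le> L\<close> is not available).\<close>

lemma gradient_lipschitz: "norm (G y - G x) \<le> L * norm (y - x)"
proof -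
  have gap: "F a - G a \<bullet> a + (norm (G b - G a))\<^sup>2 / (2 * L) \<le> F b - G a \<bullet> b" for a b
  proof -
    interpret tilted: strongly_convex_smooth "\<lambda>y. F y - G a \<bullet> y" "\<lambda>y. G y - G a" Hm \<mu> L
      by (rule strongly_convex_smooth_tilted)
    let ?z = "b - (1/L) *\<^sub>R (G b - G a)"
    have "F a - G a \<bullet> a \<le> F ?z - G a \<bullet> ?z"
      by (rule tilted.stationary_imp_minimum) simp
    with tilted.gradient_step_decrease[of b] show ?thesis
      by linarith
  qed
  define D where "D = norm (G y - G x)"
  have "D\<^sup>2 / L \<le> (G y - G x) \<bullet> (y - x)"
    using gap[of x y] gap[of y x] by (simp add: D_def norm_minus_commute inner_diff_left inner_diff_right)
  also have "\<dots> \<le> D * norm (y - x)"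
    unfolding D_def by (rule norm_cauchy_schwarz)
  finally have "D * D \<le> (L * norm (y - x)) * D"
    using L_pos by (simp add: field_simps power2_eq_square)
  then show ?thesis
    using L_pos by (cases "D = 0") (auto simp: D_def intro: mult_right_le_imp_le)
qed

end

lemma coercive_matrix_norm_ge:
  fixes A :: "real^'n::finite^'n"
  assumes "\<And>v. \<mu> * (norm v)\<^sup>2 \<le> v \<bullet> (A *v v)"
  shows "\<mu> * norm v \<le> norm (A *v v)"
proof -
  have "(\<mu> * norm v) * norm v \<le> norm (A *v v) * norm v"
    using assms[of v] norm_cauchy_schwarz[of v "A *v v"] by (simp add: power2_eq_square algebra_simps)
  then show ?thesis
    by (cases "v = 0") (auto intro: mult_right_le_imp_le)
qed

lemma coercive_matrix_invertible:
  fixes A :: "real^'n::finite^'n"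
  assumes "0 < \<mu>" and "\<And>v. \<mu> * (norm v)\<^sup>2 \<le> v \<bullet> (A *v v)"
  shows "invertible A"
proof -
  have "inj ((*v) A)"
  proof (rule injI)
    fix v w
    assume "A *v v = A *v w"
    then have "\<mu> * norm (v - w) \<le> 0"
      using coercive_matrix_norm_ge[OF assms(2), of "v - w"] by (simp add: matrix_vector_mult_diff_distrib)
    then show "v = w"
      using assms(1) by (simp add: mult_le_0_iff)
  qed
  then show ?thesis
    using matrix_left_invertible_injective invertible_left_inverse by blast
qed

lemma matrix_inv_inverse:
  assumes "invertible A"
  shows "A ** matrix_inv A = mat 1" and "matrix_inv A ** A = mat 1"
proof -
  from assms have "A ** matrix_inv A = mat 1 \<and> matrix_inv A ** A = mat 1"
    unfolding invertible_def matrix_inv_def by (rule someI_ex)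
  then show "A ** matrix_inv A = mat 1" and "matrix_inv A ** A = mat 1"
    by auto
qed

lemma coercive_matrix_inv_norm_le:
  fixes A :: "real^'n::finite^'n"
  assumes "0 < \<mu>" and "\<And>v. \<mu> * (norm v)\<^sup>2 \<le> v \<bullet> (A *v v)"
  shows "norm (matrix_inv A *v u) \<le> norm u / \<mu>"
proof -
  have "\<mu> * norm (matrix_inv A *v u) \<le> norm (A *v (matrix_inv A *v u))"
    by (rule coercive_matrix_norm_ge[OF assms(2)])
  also have "\<dots> = norm u"
    using matrix_inv_inverse(1)[OF coercive_matrix_invertible[OF assms]]
    by (simp add: matrix_vector_mul_assoc)
  finally show ?thesis
    using assms(1) by (simp add: field_simps)
qed

text \<open>The second resolvent identity \<open>A\<^sup>-\<^sup>1 - B\<^sup>-\<^sup>1 = A\<^sup>-\<^sup>1 (B - A) B\<^sup>-\<^sup>1\<close>, applied to two vectors.\<close>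

lemma matrix_inv_diff_mult:
  fixes A B :: "real^'n::finite^'n"
  assumes "invertible A" and "invertible B"
  shows "matrix_inv A *v u - matrix_inv B *v w
    = matrix_inv A *v ((u - w) + (B - A) *v (matrix_inv B *v w))"
proof -
  have right: "B *v (matrix_inv B *v w) = w"
    by (simp add: matrix_vector_mul_assoc matrix_inv_inverse(1)[OF assms(2)])
  have left: "matrix_inv A *v (A *v v) = v" for v
    by (simp add: matrix_vector_mul_assoc matrix_inv_inverse(2)[OF assms(1)])
  show ?thesis
    by (simp add: matrix_vector_mult_diff_rdistrib right matrix_vector_right_distrib
        matrix_vector_mult_diff_distrib left)
qed

lemma norm12_le_column_bound:
  fixes A :: "real^'n::finite^'m::finite"
  assumes "\<And>i. norm (A *v axis i 1) \<le> c"
  shows "norm12 A \<le> c"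
  unfolding norm12_def
proof (rule cSup_least)
  obtain i :: 'n where True by blast
  have "(\<Sum>j\<in>UNIV. \<bar>axis i (1::real) $ j\<bar>) = 1"
    by (simp add: axis_def if_distrib sum.If_cases)
  then show "{norm (A *v z) |z. (\<Sum>j\<in>UNIV. \<bar>z $ j\<bar>) = 1} \<noteq> {}"
    by blast
next
  fix a
  assume "a \<in> {norm (A *v z) |z. (\<Sum>j\<in>UNIV. \<bar>z $ j\<bar>) = 1}"
  then obtain z where z: "(\<Sum>j\<in>UNIV. \<bar>z $ j\<bar>) = 1" and a: "a = norm (A *v z)"
    by blast
  have "A *v z = (\<Sum>j\<in>UNIV. z $ j *\<^sub>R (A *v axis j 1))"
    unfolding matrix_vector_mult_basis by (simp add: matrix_mult_sum scalar_mult_eq_scaleR)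
  then have "a \<le> (\<Sum>j\<in>UNIV. \<bar>z $ j\<bar> * norm (A *v axis j 1))"
    using norm_sum[of "\<lambda>j. z $ j *\<^sub>R (A *v axis j 1)" UNIV] by (simp add: a)
  also have "\<dots> \<le> (\<Sum>j\<in>UNIV. \<bar>z $ j\<bar> * c)"
    by (intro sum_mono mult_left_mono assms) simp
  also have "\<dots> = c"
    using z by (simp add: sum_distrib_right[symmetric])
  finally show "a \<le> c" .
qed

lemma prob_simplex_weighted_sum_le:
  assumes "\<beta> \<in> prob_simplex" and "\<And>i. a i \<le> c"
  shows "(\<Sum>i\<in>UNIV. \<beta> $ i * a i) \<le> c"
proof -
  have "(\<Sum>i\<in>UNIV. \<beta> $ i * a i) \<le> (\<Sum>i\<in>UNIV. \<beta> $ i * c)"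
    using assms by (intro sum_mono mult_left_mono) (auto simp: prob_simplex_def)
  also have "\<dots> = c"
    using assms(1) by (simp add: prob_simplex_def sum_distrib_right[symmetric])
  finally show ?thesis .
qed

lemma prob_simplex_weighted_sum_ge:
  assumes "\<beta> \<in> prob_simplex" and "\<And>i. c \<le> a i"
  shows "c \<le> (\<Sum>i\<in>UNIV. \<beta> $ i * a i)"
  using prob_simplex_weighted_sum_le[OF assms(1), of "\<lambda>i. - a i" "- c"] assms(2)
  by (simp add: sum_negf)

lemma norm_prob_simplex_combination_le:
  assumes "\<beta> \<in> prob_simplex"
  shows "norm (\<Sum>i\<in>UNIV. \<beta> $ i *\<^sub>R v i) \<le> (\<Sum>i\<in>UNIV. \<beta> $ i * norm (v i))"
proof -
  have "norm (\<Sum>i\<in>UNIV. \<beta> $ i *\<^sub>R v i) \<le> (\<Sum>i\<in>UNIV. norm (\<beta> $ i *\<^sub>R v i))"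
    by (rule norm_sum)
  also have "\<dots> = (\<Sum>i\<in>UNIV. \<beta> $ i * norm (v i))"
    using assms by (intro sum.cong) (auto simp: prob_simplex_def)
  finally show ?thesis .
qed

lemma axis_in_prob_simplex: "axis i 1 \<in> prob_simplex"
  by (simp add: prob_simplex_def axis_def)

lemma gbeta_axis: "gbeta g (axis i 1) y = g i y"
  unfolding gbeta_def axis_def by (simp add: if_distrib[of "\<lambda>c. c *\<^sub>R _"] cong: if_cong)

lemma Hbeta_mult: "Hbeta H \<beta> y *v v = (\<Sum>i\<in>UNIV. \<beta> $ i *\<^sub>R (H i y *v v))"
  by (simp add: Hbeta_def matrix_vector_mult_def vec_eq_iff sum_distrib_left sum_distrib_right
      sum_component mult.assoc)
    (intro allI sum.swap)

lemma Hbeta_lipschitz: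
  assumes "\<beta> \<in> prob_simplex"
    and lip: "\<And>i y z. onorm (\<lambda>v. (H i y - H i z) *v v) \<le> K * norm (y - z)"
  shows "norm ((Hbeta H \<beta> y - Hbeta H \<beta> z) *v w) \<le> K * norm (y - z) * norm w"
proof -
  have "(Hbeta H \<beta> y - Hbeta H \<beta> z) *v w = (\<Sum>i\<in>UNIV. \<beta> $ i *\<^sub>R ((H i y - H i z) *v w))"
    by (simp add: matrix_vector_mult_diff_rdistrib Hbeta_mult sum_subtractf[symmetric] scaleR_diff_right)
  also have "norm \<dots> \<le> (\<Sum>i\<in>UNIV. \<beta> $ i * norm ((H i y - H i z) *v w))"
    by (rule norm_prob_simplex_combination_le[OF assms(1)])
  also have "\<dots> \<le> K * norm (y - z) * norm w"
  proof (rule prob_simplex_weighted_sum_le[OF assms(1)])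
    fix i
    have "norm ((H i y - H i z) *v w) \<le> onorm (\<lambda>v. (H i y - H i z) *v v) * norm w"
      by (rule onorm) (rule matrix_vector_mul_bounded_linear)
    also have "\<dots> \<le> K * norm (y - z) * norm w"
      by (intro mult_right_mono lip) simp
    finally show "norm ((H i y - H i z) *v w) \<le> K * norm (y - z) * norm w" .
  qed
  finally show ?thesis .
qed

lemma jacT_mult_axis: "jacT g y *v axis i 1 = g i y"
  by (simp add: matrix_vector_mult_basis jacT_def column_def)

lemma approx_grad_mult_axis:
  "approx_grad g H y \<beta> *v axis i 1 = - (matrix_inv (Hbeta H \<beta> y) *v g i y)"
  unfolding approx_grad_def
  by (simp add: matrix_vector_mult_uminus matrix_vector_mul_assoc[symmetric] jacT_mult_axis)

locale multiobjective =
  fixes f :: "'n::finite \<Rightarrow> real ^ 'd::finite \<Rightarrow> real"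
    and g :: "'n \<Rightarrow> real ^ 'd \<Rightarrow> real ^ 'd"
    and H :: "'n \<Rightarrow> real ^ 'd \<Rightarrow> real ^ 'd ^ 'd"
    and \<mu> L :: real
  assumes gradient: "\<And>i y. (f i has_derivative (\<lambda>h. g i y \<bullet> h)) (at y)"
    and hessian: "\<And>i y. (g i has_derivative (\<lambda>h. H i y *v h)) (at y)"
    and mu_pos: "0 < \<mu>" and mu_le_L: "\<mu> \<le> L"
    and hessian_lower: "\<And>i y v. \<mu> * (norm v)\<^sup>2 \<le> v \<bullet> (H i y *v v)"
    and hessian_upper: "\<And>i y v. v \<bullet> (H i y *v v) \<le> L * (norm v)\<^sup>2"
begin

lemma strongly_convex_smooth_objective: "strongly_convex_smooth (f i) (g i) (H i) \<mu> L"
  by unfold_locales (auto intro: gradient hessian hessian_lower hessian_upper mu_pos mu_le_L)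

lemma strongly_convex_smooth_scalarization:
  assumes "\<beta> \<in> prob_simplex"
  shows "strongly_convex_smooth (fbeta f \<beta>) (gbeta g \<beta>) (Hbeta H \<beta>) \<mu> L"
proof
  fix y
  have "((\<lambda>x. \<Sum>i\<in>UNIV. \<beta> $ i * f i x) has_derivative (\<lambda>h. \<Sum>i\<in>UNIV. \<beta> $ i * (g i y \<bullet> h))) (at y)"
    by (intro has_derivative_sum has_derivative_mult_right gradient)
  then show "(fbeta f \<beta> has_derivative (\<lambda>h. gbeta g \<beta> y \<bullet> h)) (at y)"
    by (simp add: fbeta_def[abs_def] gbeta_def inner_sum_left)
  show "(gbeta g \<beta> has_derivative (\<lambda>h. Hbeta H \<beta> y *v h)) (at y)"
    unfolding gbeta_def[abs_def] Hbeta_mult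
    by (intro has_derivative_sum has_derivative_scaleR_right hessian)
  fix v
  have quadratic_form: "v \<bullet> (Hbeta H \<beta> y *v v) = (\<Sum>i\<in>UNIV. \<beta> $ i * (v \<bullet> (H i y *v v)))"
    by (simp add: Hbeta_mult inner_sum_right)
  show "\<mu> * (norm v)\<^sup>2 \<le> v \<bullet> (Hbeta H \<beta> y *v v)"
    unfolding quadratic_form by (intro prob_simplex_weighted_sum_ge[OF assms] hessian_lower)
  show "v \<bullet> (Hbeta H \<beta> y *v v) \<le> L * (norm v)\<^sup>2"
    unfolding quadratic_form by (intro prob_simplex_weighted_sum_le[OF assms] hessian_upper)
qed (use mu_pos mu_le_L in auto)

lemma xstar_stationary:
  assumes "\<beta> \<in> prob_simplex"
  shows "gbeta g \<beta> (xstar f \<beta>) = 0"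
proof -
  interpret scalarized: strongly_convex_smooth "fbeta f \<beta>" "gbeta g \<beta>" "Hbeta H \<beta>" \<mu> L
    using assms by (rule strongly_convex_smooth_scalarization)
  obtain p where "gbeta g \<beta> p = 0"
    using scalarized.exists_stationary by blast
  with scalarized.argmin_eq_stationary show ?thesis
    by (simp add: xstar_def)
qed

lemma pareto_set_bounded: "bounded (pareto_set g)"
proof -
  define C where "C = (\<Sum>i\<in>UNIV. norm (g i 0))"
  have "p \<in> cball 0 (C / \<mu>)" if p: "p \<in> pareto_set g" for p
  proof -
    obtain \<beta> where \<beta>: "\<beta> \<in> prob_simplex" and stationary: "gbeta g \<beta> p = 0"
      using p unfolding pareto_set_def by blast
    interpret scalarized: strongly_convex_smooth "fbeta f \<beta>" "gbeta g \<beta>" "Hbeta H \<beta>" \<mu> L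
      using \<beta> by (rule strongly_convex_smooth_scalarization)
    have "\<mu> * norm (0 - p) \<le> norm (gbeta g \<beta> 0)"
      by (rule scalarized.stationary_dist_le[OF stationary])
    also have "\<dots> \<le> (\<Sum>i\<in>UNIV. \<beta> $ i * norm (g i 0))"
      unfolding gbeta_def by (rule norm_prob_simplex_combination_le[OF \<beta>])
    also have "\<dots> \<le> C"
      unfolding C_def by (intro prob_simplex_weighted_sum_le[OF \<beta>] member_le_sum) auto
    finally show ?thesis
      using mu_pos by (simp add: field_simps)
  qed
  then show ?thesis
    by (meson bounded_cball bounded_subset subsetI)
qed

lemma norm_gradient_le_diameter:
  assumes "p \<in> pareto_set g"
  shows "norm (g i p) \<le> L * diameter (pareto_set g)"
proof -
  interpret objective: strongly_convex_smooth "f i" "g i" "H i" \<mu> L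
    by (rule strongly_convex_smooth_objective)
  obtain q where q: "g i q = 0"
    using objective.exists_stationary by blast
  then have "q \<in> pareto_set g"
    using axis_in_prob_simplex[of i] unfolding pareto_set_def by (metis (mono_tags) gbeta_axis mem_Collect_eq)
  then have "norm (p - q) \<le> diameter (pareto_set g)"
    using diameter_bounded_bound[OF pareto_set_bounded assms] by (simp add: dist_norm)
  then show ?thesis
    using objective.gradient_lipschitz[of p q] q objective.L_pos by (simp add: order_trans)
qed

lemma approx_grad_error_column:
  assumes \<beta>: "\<beta> \<in> prob_simplex"
    and lip: "\<And>i y z. onorm (\<lambda>v. (H i y - H i z) *v v) \<le> L\<^sub>H * norm (y - z)"
    and LH_nonneg: "0 \<le> L\<^sub>H"
  shows "norm ((grad_xstar f g H \<beta> - approx_grad g H x \<beta>) *v axis i 1)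
    \<le> L / \<mu> * (1 + L\<^sub>H * diameter (pareto_set g) / \<mu>) * norm (x - xstar f \<beta>)"
proof -
  interpret scalarized: strongly_convex_smooth "fbeta f \<beta>" "gbeta g \<beta>" "Hbeta H \<beta>" \<mu> L
    using \<beta> by (rule strongly_convex_smooth_scalarization)
  interpret objective: strongly_convex_smooth "f i" "g i" "H i" \<mu> L
    by (rule strongly_convex_smooth_objective)
  define xb where "xb = xstar f \<beta>"
  define A where "A = Hbeta H \<beta> x"
  define B where "B = Hbeta H \<beta> xb"
  define R where "R = diameter (pareto_set g)"
  define e where "e = norm (x - xb)"
  have inv_le: "norm (matrix_inv (Hbeta H \<beta> y) *v u) \<le> norm u / \<mu>" for y u
    by (rule coercive_matrix_inv_norm_le[OF mu_pos scalarized.hessian_lower])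
  have invertible: "invertible (Hbeta H \<beta> y)" for y
    by (rule coercive_matrix_invertible[OF mu_pos scalarized.hessian_lower])
  have "xb \<in> pareto_set g"
    using \<beta> xstar_stationary[OF \<beta>] unfolding pareto_set_def xb_def by blast
  then have "norm (g i xb) \<le> L * R"
    unfolding R_def by (rule norm_gradient_le_diameter)
  then have inv_gradient: "norm (matrix_inv B *v g i xb) \<le> L * R / \<mu>"
    using inv_le[of xb "g i xb"] mu_pos unfolding B_def by (meson divide_right_mono less_imp_le order_trans)
  have "norm ((B - A) *v (matrix_inv B *v g i xb)) \<le> L\<^sub>H * norm (xb - x) * norm (matrix_inv B *v g i xb)"
    unfolding A_def B_def by (rule Hbeta_lipschitz[OF \<beta> lip])
  also have "\<dots> \<le> L\<^sub>H * e * (L * R / \<mu>)"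
    unfolding e_def norm_minus_commute[of xb x] using LH_nonneg by (intro mult_left_mono inv_gradient) simp
  finally have hessian_term: "norm ((B - A) *v (matrix_inv B *v g i xb)) \<le> L\<^sub>H * e * (L * R / \<mu>)" .
  have gradient_term: "norm (g i x - g i xb) \<le> L * e"
    unfolding e_def by (rule objective.gradient_lipschitz)
  have "(grad_xstar f g H \<beta> - approx_grad g H x \<beta>) *v axis i 1
      = matrix_inv A *v g i x - matrix_inv B *v g i xb"
    by (simp add: grad_xstar_def matrix_vector_mult_diff_rdistrib approx_grad_mult_axis A_def B_def xb_def)
  also have "\<dots> = matrix_inv A *v ((g i x - g i xb) + (B - A) *v (matrix_inv B *v g i xb))"
    unfolding A_def B_def by (rule matrix_inv_diff_mult[OF invertible invertible])
  finally have column: "(grad_xstar f g H \<beta> - approx_grad g H x \<beta>) *v axis i 1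
      = matrix_inv A *v ((g i x - g i xb) + (B - A) *v (matrix_inv B *v g i xb))" .
  have "norm ((grad_xstar f g H \<beta> - approx_grad g H x \<beta>) *v axis i 1)
      \<le> norm ((g i x - g i xb) + (B - A) *v (matrix_inv B *v g i xb)) / \<mu>"
    unfolding column A_def by (rule inv_le)
  also have "\<dots> \<le> (L * e + L\<^sub>H * e * (L * R / \<mu>)) / \<mu>"
    using norm_triangle_le[OF add_mono[OF gradient_term hessian_term]] mu_pos by (simp add: divide_right_mono)
  also have "\<dots> = L / \<mu> * (1 + L\<^sub>H * R / \<mu>) * e"
    using mu_pos by (simp add: field_simps)
  finally show ?thesis
    by (simp add: R_def e_def xb_def)
qed

end

theorem lemma3:
  fixes f :: "'n::finite \<Rightarrow> real ^ 'd::finite \<Rightarrow> real"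
    and g :: "'n \<Rightarrow> real ^ 'd \<Rightarrow> real ^ 'd"
    and H :: "'n \<Rightarrow> real ^ 'd \<Rightarrow> real ^ 'd ^ 'd"
    and \<mu> L L\<^sub>H :: real
    and x :: "real ^ 'd" and \<beta> :: "real ^ 'n"
  assumes grad: "\<And>i y. (f i has_derivative (\<lambda>h. g i y \<bullet> h)) (at y)"
    and hess: "\<And>i y. (g i has_derivative (\<lambda>h. H i y *v h)) (at y)"
    and mu_pos: "0 < \<mu>" and mu_le_L: "\<mu> \<le> L"
    and lower: "\<And>i y v. \<mu> * (norm v)\<^sup>2 \<le> v \<bullet> (H i y *v v)"
    and upper: "\<And>i y v. v \<bullet> (H i y *v v) \<le> L * (norm v)\<^sup>2"
    and lip: "\<And>i y z. onorm (\<lambda>v. (H i y - H i z) *v v) \<le> L\<^sub>H * norm (y - z)"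
    and R_pos: "0 < diameter (pareto_set g)"
    and beta: "\<beta> \<in> prob_simplex"
  shows "let \<kappa> = L / \<mu>; R = diameter (pareto_set g);
             M0 = \<kappa> * R; M1 = 2 * \<kappa>\<^sup>2 * R * (1 + L\<^sub>H * R / \<mu>)
         in norm12 (grad_xstar f g H \<beta> - approx_grad g H x \<beta>)
              \<le> (1 / \<mu>) * (M1 / (2 * M0)) * norm (gbeta g \<beta> x)"
proof -
  interpret multiobjective f g H \<mu> L
    by unfold_locales (rule grad hess mu_pos mu_le_L lower upper)+
  interpret scalarized: strongly_convex_smooth "fbeta f \<beta>" "gbeta g \<beta>" "Hbeta H \<beta>" \<mu> L
    using beta by (rule strongly_convex_smooth_scalarization)
  define R where "R = diameter (pareto_set g)"
  define c where "c = L / \<mu> * (1 + L\<^sub>H * R / \<mu>)"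
  obtain i :: 'n and k :: 'd where True by blast
  have "0 \<le> onorm (\<lambda>v. (H i (axis k 1) - H i 0) *v v)"
    by (intro onorm_pos_le matrix_vector_mul_bounded_linear)
  also have "\<dots> \<le> L\<^sub>H * norm (axis k (1::real) - 0)"
    by (rule lip)
  finally have LH_nonneg: "0 \<le> L\<^sub>H"
    by simp
  have c_nonneg: "0 \<le> c"
    using mu_pos scalarized.L_pos LH_nonneg R_pos by (simp add: c_def R_def)
  have "norm12 (grad_xstar f g H \<beta> - approx_grad g H x \<beta>) \<le> c * norm (x - xstar f \<beta>)"
    unfolding c_def R_def by (intro norm12_le_column_bound approx_grad_error_column beta lip LH_nonneg)
  also have "\<dots> \<le> c * (norm (gbeta g \<beta> x) / \<mu>)"
    using scalarized.stationary_dist_le[OF xstar_stationary[OF beta], of x] mu_pos c_nonneg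
    by (intro mult_left_mono) (simp_all add: field_simps)
  also have "\<dots> = (1 / \<mu>) * ((2 * (L / \<mu>)\<^sup>2 * R * (1 + L\<^sub>H * R / \<mu>)) / (2 * (L / \<mu> * R))) * norm (gbeta g \<beta> x)"
    using mu_pos scalarized.L_pos R_pos by (simp add: c_def R_def field_simps power2_eq_square)
  finally show ?thesis
    by (simp only: Let_def R_def)
qed

end
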